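(* Let $(X,d)$ be a metric space. The following are equivalent: (i) $(X,d)$ is ultrametric; (ii) for every $W\subseteq X$ and every $\varepsilon>0$, $$\mathcal M^*_\varepsilon(W)=\hat{\mathcal N}^X_\varepsilon(W)=\hat{\mathcal N}_\varepsilon(W)=\hat{\mathcal M}_\varepsilon(W);$$ (iii) for every compact $W\subseteq X$ and every $\varepsilon>0$, $\mathcal N_\varepsilon(W)=\mathcal M_\varepsilon(W)$.
   Context: $(X,d)$ is ultrametric if $d(x,y)\le\max\{d(x,z),d(z,y)\}$ for all $x,y,z$. Closed balls: $B(c,r)=\{x:d(x,c)\le r\}$. $C$ is an $\varepsilon$-net for $W$ if $W\subseteq\bigcup_{c\in C}B(c,\varepsilon)$. $A$ is $\varepsilon$-distinguishable if $d(x,y)>\varepsilon$ for distinct $x,y\in A$. For a totally bounded $W$, the covering number $\mathcal N_\varepsilon(W)$ is the smallest cardinality of a subset of $W$ which is an $\varepsilon$-net for $W$, and the packing number $\mathcal M_\varepsilon(W)$ is the maximal cardinality of an $\varepsilon$-distinguishable subset of $W$. For arbitrary $W,A\subseteq X$: $\hat{\mathcal N}^A_\varepsilon(W)$ is the minimal cardinality of an $\varepsilon$-net $C\subseteq A$ for $W$; $\hat{\mathcal N}_\varepsilon(W):=\hat{\mathcal N}^W_\varepsilon(W)$; $\hat{\mathcal M}_\varepsilon(W)$ is the smallest cardinality of an $\varepsilon$-distinguishable $A\subseteq W$ that is maximal under inclusion among $\varepsilon$-distinguishable subsets of $W$; $\mathcal M^*_\varepsilon(W)$ is the smallest cardinal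 $\ge\operatorname{card}(A)$ for every $\varepsilon$-distinguishable $A\subseteq W$. *)

theory Defs
  imports "HOL-Analysis.Analysis"
begin

text \<open>Metric space (M,d) given by the locale Metric_space. Cardinals are represented
  by cardinal-order relations card_of (BNF cardinals), compared with =o / \<le>o.\<close>

definition ultrametric :: "'a set \<Rightarrow> ('a \<Rightarrow> 'a \<Rightarrow> real) \<Rightarrow> bool" where
  "ultrametric M d \<longleftrightarrow>
     (\<forall>x\<in>M. \<forall>y\<in>M. \<forall>z\<in>M. d x y \<le> max (d x z) (d z y))"

definition cball_in :: "'a set \<Rightarrow> ('a \<Rightarrow> 'a \<Rightarrow> real) \<Rightarrow> 'a \<Rightarrow> real \<Rightarrow> 'a set" where
  "cball_in M d c r = {x\<in>M. d x c \<le> r}"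

definition eps_net :: "'a set \<Rightarrow> ('a \<Rightarrow> 'a \<Rightarrow> real) \<Rightarrow> real \<Rightarrow> 'a set \<Rightarrow> 'a set \<Rightarrow> bool" where
  "eps_net M d \<epsilon> C W \<longleftrightarrow> W \<subseteq> (\<Union>c\<in>C. cball_in M d c \<epsilon>)"

definition eps_dist :: "('a \<Rightarrow> 'a \<Rightarrow> real) \<Rightarrow> real \<Rightarrow> 'a set \<Rightarrow> bool" where
  "eps_dist d \<epsilon> A \<longleftrightarrow> (\<forall>x\<in>A. \<forall>y\<in>A. x \<noteq> y \<longrightarrow> d x y > \<epsilon>)"

text \<open>The smallest cardinality of a set satisfying P (as a cardinal, i.e. card_of of a
  minimising witness; cardinals are well-ordered so a minimiser exists when P is satisfiable).\<close>
definition min_card :: "('a set \<Rightarrow> bool) \<Rightarrow> 'a rel" where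
  "min_card P = card_of (SOME C. P C \<and> (\<forall>C'. P C' \<longrightarrow> ordLeq3 (card_of C) (card_of C')))"

definition hatN_in :: "'a set \<Rightarrow> ('a \<Rightarrow> 'a \<Rightarrow> real) \<Rightarrow> 'a set \<Rightarrow> real \<Rightarrow> 'a set \<Rightarrow> 'a rel" where
  "hatN_in M d A \<epsilon> W = min_card (\<lambda>C. C \<subseteq> A \<and> eps_net M d \<epsilon> C W)"

definition hatN :: "'a set \<Rightarrow> ('a \<Rightarrow> 'a \<Rightarrow> real) \<Rightarrow> real \<Rightarrow> 'a set \<Rightarrow> 'a rel" where
  "hatN M d \<epsilon> W = hatN_in M d W \<epsilon> W"

definition hatM :: "('a \<Rightarrow> 'a \<Rightarrow> real) \<Rightarrow> real \<Rightarrow> 'a set \<Rightarrow> 'a rel" where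
  "hatM d \<epsilon> W = min_card (\<lambda>A. A \<subseteq> W \<and> eps_dist d \<epsilon> A \<and>
       (\<forall>B. A \<subseteq> B \<and> B \<subseteq> W \<and> eps_dist d \<epsilon> B \<longrightarrow> B = A))"

text \<open>M*_eps(W): smallest cardinal \<ge> card A for every eps-distinguishable A \<subseteq> W.
  Such a cardinal is \<le> |W|, hence it is the cardinality of some subset of W.\<close>
definition Mstar :: "('a \<Rightarrow> 'a \<Rightarrow> real) \<Rightarrow> real \<Rightarrow> 'a set \<Rightarrow> 'a rel" where
  "Mstar d \<epsilon> W = min_card (\<lambda>B. B \<subseteq> W \<and>
       (\<forall>A. A \<subseteq> W \<and> eps_dist d \<epsilon> A \<longrightarrow> ordLeq3 (card_of A) (card_of B)))"

definition covering_number :: "'a set \<Rightarrow> ('a \<Rightarrow> 'a \<Rightarrow> real) \<Rightarrow> real \<Rightarrow> 'a set \<Rightarrow> nat" where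
  "covering_number M d \<epsilon> W = (LEAST n. \<exists>C. C \<subseteq> W \<and> finite C \<and> card C = n \<and> eps_net M d \<epsilon> C W)"

definition packing_number :: "('a \<Rightarrow> 'a \<Rightarrow> real) \<Rightarrow> real \<Rightarrow> 'a set \<Rightarrow> nat" where
  "packing_number d \<epsilon> W = (GREATEST n. \<exists>A. A \<subseteq> W \<and> finite A \<and> card A = n \<and> eps_dist d \<epsilon> A)"

end

theory Submission
  imports Defs
begin

(* In an ultrametric space a closed eps-ball of radius eps contains at
   most one point of any eps-distinguishable set, so every eps-distinguishable subset
   A of W injects into every eps-net C of W (send a point to a centre covering it).
   An inclusion-maximal eps-distinguishable subset T of W (it exists by Zorn's lemma)
   is itself an eps-net of W; hence T realises all four cardinal invariants at once,
   and, for compact (so totally bounded) W, T is finite and realises both the covering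
   and the packing number.  Conversely, if the ultrametric inequality fails at x, y, z,
   then for eps = max (d x z) (d z y) the set {x, y} is eps-distinguishable while {z}
   is an eps-net of the finite (hence compact) set {x, y, z}, which separates the
   invariants. *)

text \<open>Cardinals are well-ordered, so a satisfiable property has a witness of minimal
  cardinality; the Hilbert choice in min_card picks such a witness.\<close>
lemma min_card_witness:
  assumes "P C0"
  defines "C \<equiv> SOME C. P C \<and> (\<forall>C'. P C' \<longrightarrow> ordLeq3 (card_of C) (card_of C'))"
  shows "P C \<and> (\<forall>C'. P C' \<longrightarrow> ordLeq3 (card_of C) (card_of C'))"
proof -
  have "\<exists>r \<in> card_of ` {C. P C}. \<forall>r' \<in> card_of ` {C. P C}. ordLeq3 r r'"
    by (rule exists_minim_Well_order) (use assms card_of_Well_order in auto)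
  then have "\<exists>C. P C \<and> (\<forall>C'. P C' \<longrightarrow> ordLeq3 (card_of C) (card_of C'))" by auto
  then show ?thesis unfolding C_def by (rule someI_ex)
qed

lemma min_card_iso:
  assumes "P T" "\<forall>C. P C \<longrightarrow> ordLeq3 (card_of T) (card_of C)"
  shows "ordIso2 (min_card P) (card_of T)"
  using min_card_witness[of P T] assms unfolding min_card_def ordIso_iff_ordLeq by blast

lemma min_card_le:
  assumes "P T"
  shows "ordLeq3 (min_card P) (card_of T)"
  using min_card_witness[of P T] assms unfolding min_card_def by blast

lemma min_card_ge:
  assumes "P T" "\<And>C. P C \<Longrightarrow> ordLeq3 (card_of A) (card_of C)"
  shows "ordLeq3 (card_of A) (min_card P)"
  using min_card_witness[of P T] assms unfolding min_card_def by blast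

text \<open>Zorn's lemma: every set contains an inclusion-maximal eps-distinguishable subset
  (the union of a chain of eps-distinguishable sets is eps-distinguishable).\<close>
lemma exists_maximal_eps_dist:
  obtains T where "T \<subseteq> W" "eps_dist d \<epsilon> T"
    "\<forall>B. T \<subseteq> B \<and> B \<subseteq> W \<and> eps_dist d \<epsilon> B \<longrightarrow> B = T"
proof -
  let ?A = "{A. A \<subseteq> W \<and> eps_dist d \<epsilon> A}"
  have "\<Union>C \<in> ?A" if C: "C \<in> chains ?A" for C
  proof -
    have "d x y > \<epsilon>" if "x \<in> \<Union>C" "y \<in> \<Union>C" "x \<noteq> y" for x y
    proof -
      from that obtain X Y where XY: "X \<in> C" "Y \<in> C" "x \<in> X" "y \<in> Y" by auto
      from C XY have "X \<subseteq> Y \<or> Y \<subseteq> X" unfolding chains_def chain_subset_def by blast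
      then show ?thesis using XY C \<open>x \<noteq> y\<close> unfolding chains_def eps_dist_def by blast
    qed
    then show ?thesis using C unfolding chains_def eps_dist_def by blast
  qed
  from Zorn_Lemma[OF ballI[OF this]] obtain T where "T \<in> ?A" "\<forall>X\<in>?A. T \<subseteq> X \<longrightarrow> X = T"
    by blast
  then show ?thesis using that by auto
qed

context Metric_space
begin

section \<open>The ultrametric direction\<close>

text \<open>In any metric space, a maximal eps-distinguishable subset of W is an eps-net of W:
  a point of W outside it is within eps of one of its points.\<close>
lemma maximal_eps_dist_is_net:
  assumes W: "W \<subseteq> M" and A: "A \<subseteq> W" and e: "\<epsilon> > 0" and dA: "eps_dist d \<epsilon> A"
    and maximal: "\<forall>B. A \<subseteq> B \<and> B \<subseteq> W \<and> eps_dist d \<epsilon> B \<longrightarrow> B = A"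
  shows "eps_net M d \<epsilon> A W"
  unfolding eps_net_def cball_in_def
proof
  fix w assume w: "w \<in> W"
  show "w \<in> (\<Union>c\<in>A. {x \<in> M. d x c \<le> \<epsilon>})"
  proof (cases "w \<in> A")
    case True then show ?thesis using w W e by (intro UN_I[of w]) auto
  next
    case False
    have "\<not> eps_dist d \<epsilon> (insert w A)" using maximal False w A by blast
    then obtain a where "a \<in> A" "d w a \<le> \<epsilon> \<or> d a w \<le> \<epsilon>"
      using dA unfolding eps_dist_def by force
    then show ?thesis using commute w W by (auto simp: not_less)
  qed
qed

text \<open>Key ultrametric fact: two points at distance at most eps from a common centre are
  at distance at most eps from each other, so assigning to each point of an
  eps-distinguishable set a covering centre is injective.\<close>
lemma ultrametric_dist_le_net:
  assumes u: "ultrametric M d" and W: "W \<subseteq> M" and A: "A \<subseteq> W" and C: "C \<subseteq> M"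
    and dA: "eps_dist d \<epsilon> A" and net: "eps_net M d \<epsilon> C W"
  shows "ordLeq3 (card_of A) (card_of C)"
proof -
  define f where "f a = (SOME c. c \<in> C \<and> d a c \<le> \<epsilon>)" for a
  have f: "f a \<in> C \<and> d a (f a) \<le> \<epsilon>" if "a \<in> A" for a
  proof -
    from net that A obtain c where "c \<in> C \<and> d a c \<le> \<epsilon>"
      unfolding eps_net_def cball_in_def by blast
    then show ?thesis unfolding f_def by (rule someI)
  qed
  have "inj_on f A"
  proof (rule inj_onI, rule ccontr)
    fix a a' assume a: "a \<in> A" "a' \<in> A" "f a = f a'" "a \<noteq> a'"
    have "d a a' \<le> max (d a (f a)) (d (f a) a')"
      using u a A W C f[OF a(1)] unfolding ultrametric_def by blast
    also have "d (f a) a' = d a' (f a')" using a commute by simp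
    finally have "d a a' \<le> \<epsilon>" using f[OF a(1)] f[OF a(2)] by (meson max.boundedI order_trans)
    with dA a show False unfolding eps_dist_def by force
  qed
  moreover have "f ` A \<subseteq> C" using f by auto
  ultimately show ?thesis using card_of_ordLeq by blast
qed

lemma ultrametric_card_dist_le_net:
  assumes "ultrametric M d" "W \<subseteq> M" "A \<subseteq> W" "C \<subseteq> M" "finite C"
    "eps_dist d \<epsilon> A" "eps_net M d \<epsilon> C W"
  shows "finite A \<and> card A \<le> card C"
proof -
  from ultrametric_dist_le_net[OF assms(1-4,6,7)] obtain f
    where inj: "inj_on f A" and im: "f ` A \<subseteq> C"
    using card_of_ordLeq[of A C] by blast
  have "finite A" using finite_imageD[OF finite_subset[OF im assms(5)] inj] .
  with card_inj_on_le[OF inj im assms(5)] show ?thesis by simp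
qed

lemma ultrametric_invariants_iso_maximal:
  assumes u: "ultrametric M d" and W: "W \<subseteq> M" and e: "\<epsilon> > 0"
    and T: "T \<subseteq> W" "eps_dist d \<epsilon> T" "\<forall>B. T \<subseteq> B \<and> B \<subseteq> W \<and> eps_dist d \<epsilon> B \<longrightarrow> B = T"
  shows "ordIso2 (Mstar d \<epsilon> W) (card_of T)" "ordIso2 (hatN_in M d M \<epsilon> W) (card_of T)"
    "ordIso2 (hatN M d \<epsilon> W) (card_of T)" "ordIso2 (hatM d \<epsilon> W) (card_of T)"
proof -
  have netT: "eps_net M d \<epsilon> T W" using maximal_eps_dist_is_net[OF W T(1) e T(2,3)] .
  have TM: "T \<subseteq> M" using T W by blast
  note le = ultrametric_dist_le_net[OF u W]
  show "ordIso2 (Mstar d \<epsilon> W) (card_of T)" unfolding Mstar_def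
  proof (rule min_card_iso)
    show "T \<subseteq> W \<and> (\<forall>A. A \<subseteq> W \<and> eps_dist d \<epsilon> A \<longrightarrow> ordLeq3 (card_of A) (card_of T))"
      using T(1) le[OF _ TM _ netT] by blast
    show "\<forall>C. C \<subseteq> W \<and> (\<forall>A. A \<subseteq> W \<and> eps_dist d \<epsilon> A \<longrightarrow> ordLeq3 (card_of A) (card_of C))
       \<longrightarrow> ordLeq3 (card_of T) (card_of C)"
      using T(1,2) by blast
  qed
  show "ordIso2 (hatN_in M d M \<epsilon> W) (card_of T)" unfolding hatN_in_def
  proof (rule min_card_iso)
    show "T \<subseteq> M \<and> eps_net M d \<epsilon> T W" using TM netT by blast
    show "\<forall>C. C \<subseteq> M \<and> eps_net M d \<epsilon> C W \<longrightarrow> ordLeq3 (card_of T) (card_of C)"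
      using le[OF T(1) _ T(2)] by blast
  qed
  show "ordIso2 (hatN M d \<epsilon> W) (card_of T)" unfolding hatN_def hatN_in_def
  proof (rule min_card_iso)
    show "T \<subseteq> W \<and> eps_net M d \<epsilon> T W" using T(1) netT by blast
    show "\<forall>C. C \<subseteq> W \<and> eps_net M d \<epsilon> C W \<longrightarrow> ordLeq3 (card_of T) (card_of C)"
      using le[OF T(1) _ T(2)] W by blast
  qed
  show "ordIso2 (hatM d \<epsilon> W) (card_of T)" unfolding hatM_def
  proof (rule min_card_iso)
    show "T \<subseteq> W \<and> eps_dist d \<epsilon> T \<and> (\<forall>B. T \<subseteq> B \<and> B \<subseteq> W \<and> eps_dist d \<epsilon> B \<longrightarrow> B = T)"
      using T by blast
    show "\<forall>C. C \<subseteq> W \<and> eps_dist d \<epsilon> C \<and> (\<forall>B. C \<subseteq> B \<and> B \<subseteq> W \<and> eps_dist d \<epsilon> B \<longrightarrow> B = C)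
        \<longrightarrow> ordLeq3 (card_of T) (card_of C)"
    proof (intro allI impI)
      fix C assume C: "C \<subseteq> W \<and> eps_dist d \<epsilon> C \<and> (\<forall>B. C \<subseteq> B \<and> B \<subseteq> W \<and> eps_dist d \<epsilon> B \<longrightarrow> B = C)"
      then have "eps_net M d \<epsilon> C W" using maximal_eps_dist_is_net[OF W _ e] by blast
      then show "ordLeq3 (card_of T) (card_of C)" using le[OF T(1) _ T(2)] C W by blast
    qed
  qed
qed

lemma ultrametric_invariants_agree:
  assumes u: "ultrametric M d" and W: "W \<subseteq> M" and e: "\<epsilon> > 0"
  shows "ordIso2 (Mstar d \<epsilon> W) (hatN_in M d M \<epsilon> W) \<and>
         ordIso2 (hatN_in M d M \<epsilon> W) (hatN M d \<epsilon> W) \<and>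
         ordIso2 (hatN M d \<epsilon> W) (hatM d \<epsilon> W)"
proof -
  obtain T where T: "T \<subseteq> W" "eps_dist d \<epsilon> T"
    "\<forall>B. T \<subseteq> B \<and> B \<subseteq> W \<and> eps_dist d \<epsilon> B \<longrightarrow> B = T"
    by (rule exists_maximal_eps_dist)
  note iso = ultrametric_invariants_iso_maximal[OF u W e T]
  note iso' = iso[THEN ordIso_symmetric]
  show ?thesis
    using ordIso_transitive[OF iso(1) iso'(2)] ordIso_transitive[OF iso(2) iso'(3)]
      ordIso_transitive[OF iso(3) iso'(4)] by (intro conjI)
qed

lemma compact_has_finite_net:
  assumes "compactin mtopology W" "\<epsilon> > 0"
  obtains K where "finite K" "K \<subseteq> W" "eps_net M d \<epsilon> K W"
proof -
  have "mtotally_bounded W" using compactin_imp_mtotally_bounded[OF assms(1)] .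
  then have "\<exists>K. finite K \<and> K \<subseteq> W \<and> W \<subseteq> (\<Union>x\<in>K. mball x \<epsilon>)"
    unfolding mtotally_bounded_def using assms(2) by blast
  then obtain K where K: "finite K" "K \<subseteq> W" "W \<subseteq> (\<Union>x\<in>K. mball x \<epsilon>)" by blast
  have "eps_net M d \<epsilon> K W" unfolding eps_net_def cball_in_def
  proof
    fix w assume "w \<in> W"
    with K(3) obtain k where "k \<in> K" "k \<in> M" "w \<in> M" "d k w < \<epsilon>" by auto
    then have "w \<in> {x \<in> M. d x k \<le> \<epsilon>}" using commute[of w k] by simp
    with \<open>k \<in> K\<close> show "w \<in> (\<Union>c\<in>K. {x \<in> M. d x c \<le> \<epsilon>})" by blast
  qed
  with K(1,2) show ?thesis by (rule that)
qed

text \<open>Part (iii) of the theorem in the ultrametric case: a maximal eps-distinguishable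
  subset of a compact W is finite and realises both numbers.\<close>
lemma ultrametric_covering_eq_packing:
  assumes u: "ultrametric M d" and W: "W \<subseteq> M" and e: "\<epsilon> > 0"
    and cW: "compactin mtopology W"
  shows "covering_number M d \<epsilon> W = packing_number d \<epsilon> W"
proof -
  obtain T where T: "T \<subseteq> W" "eps_dist d \<epsilon> T"
    "\<forall>B. T \<subseteq> B \<and> B \<subseteq> W \<and> eps_dist d \<epsilon> B \<longrightarrow> B = T"
    by (rule exists_maximal_eps_dist)
  have netT: "eps_net M d \<epsilon> T W" using maximal_eps_dist_is_net[OF W T(1) e T(2,3)] .
  obtain K where K: "finite K" "K \<subseteq> W" "eps_net M d \<epsilon> K W"
    using compact_has_finite_net[OF cW e] .
  note le = ultrametric_card_dist_le_net[OF u W]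
  have finT: "finite T" using le[OF T(1) _ K(1) T(2) K(3)] K(2) W by blast
  have "covering_number M d \<epsilon> W = card T" unfolding covering_number_def
  proof (rule Least_equality)
    show "\<exists>C. C \<subseteq> W \<and> finite C \<and> card C = card T \<and> eps_net M d \<epsilon> C W"
      using T finT netT by blast
    show "card T \<le> n" if "\<exists>C. C \<subseteq> W \<and> finite C \<and> card C = n \<and> eps_net M d \<epsilon> C W" for n
      using that le[OF T(1) _ _ T(2)] W by blast
  qed
  moreover have "packing_number d \<epsilon> W = card T" unfolding packing_number_def
  proof (rule Greatest_equality)
    show "\<exists>A. A \<subseteq> W \<and> finite A \<and> card A = card T \<and> eps_dist d \<epsilon> A"
      using T finT by blast
    show "n \<le> card T" if "\<exists>A. A \<subseteq> W \<and> finite A \<and> card A = n \<and> eps_dist d \<epsilon> A" for n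
      using that le[OF _ _ finT _ netT] T(1) W by blast
  qed
  ultimately show ?thesis by simp
qed

section \<open>The non-ultrametric direction\<close>

lemma non_ultrametric_witness:
  assumes "\<not> ultrametric M d"
  obtains x y z \<epsilon> where "x \<in> M" "y \<in> M" "z \<in> M" "\<epsilon> > 0" "x \<noteq> y"
    "eps_dist d \<epsilon> {x, y}" "eps_net M d \<epsilon> {z} {x, y, z}"
proof -
  from assms obtain x y z where xyz: "x \<in> M" "y \<in> M" "z \<in> M" "d x y > max (d x z) (d z y)"
    unfolding ultrametric_def by force
  define \<epsilon> where "\<epsilon> = max (d x z) (d z y)"
  have "x \<noteq> y"
  proof
    assume "x = y"
    then have "d x y = 0" using xyz(2) by simp
    with xyz(4) nonneg[of x z] show False by linarith
  qed
  have "\<epsilon> > 0"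
  proof (rule ccontr)
    assume "\<not> \<epsilon> > 0"
    then have "d x z \<le> 0" "d z y \<le> 0" unfolding \<epsilon>_def by auto
    then have "d x z = 0" "d z y = 0" using nonneg[of x z] nonneg[of z y] by linarith+
    with xyz \<open>x \<noteq> y\<close> show False by simp
  qed
  moreover have "eps_dist d \<epsilon> {x, y}"
    using xyz commute[of y x] unfolding eps_dist_def \<epsilon>_def by auto
  moreover have "eps_net M d \<epsilon> {z} {x, y, z}"
    using xyz commute[of y z] \<open>\<epsilon> > 0\<close> unfolding eps_net_def cball_in_def \<epsilon>_def by auto
  ultimately show ?thesis using that xyz(1-3) \<open>x \<noteq> y\<close> by blast
qed

text \<open>Failure of (ii): on the witness set, M* is at least two while a one-point net exists.\<close>
lemma non_ultrametric_Mstar_not_hatN_in: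
  assumes "\<not> ultrametric M d"
  shows "\<exists>W \<epsilon>. W \<subseteq> M \<and> \<epsilon> > 0 \<and> \<not> ordIso2 (Mstar d \<epsilon> W) (hatN_in M d M \<epsilon> W)"
proof -
  obtain x y z \<epsilon> where xyz: "x \<in> M" "y \<in> M" "z \<in> M" "\<epsilon> > 0" "x \<noteq> y"
    and dist: "eps_dist d \<epsilon> {x, y}" and net: "eps_net M d \<epsilon> {z} {x, y, z}"
    using non_ultrametric_witness[OF assms] by blast
  let ?W = "{x, y, z}"
  have "\<not> ordIso2 (Mstar d \<epsilon> ?W) (hatN_in M d M \<epsilon> ?W)"
  proof
    assume iso: "ordIso2 (Mstar d \<epsilon> ?W) (hatN_in M d M \<epsilon> ?W)"
    have "ordLeq3 (card_of {x, y}) (Mstar d \<epsilon> ?W)" unfolding Mstar_def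
    proof (rule min_card_ge[where T="?W"])
      show "?W \<subseteq> ?W \<and> (\<forall>A. A \<subseteq> ?W \<and> eps_dist d \<epsilon> A \<longrightarrow> ordLeq3 (card_of A) (card_of ?W))"
        using card_of_mono1[of _ ?W] by blast
      show "ordLeq3 (card_of {x, y}) (card_of C)"
        if "C \<subseteq> ?W \<and> (\<forall>A. A \<subseteq> ?W \<and> eps_dist d \<epsilon> A \<longrightarrow> ordLeq3 (card_of A) (card_of C))" for C
      proof -
        have "{x, y} \<subseteq> ?W" by blast
        with that dist show ?thesis by blast
      qed
    qed
    moreover have "ordLeq3 (hatN_in M d M \<epsilon> ?W) (card_of {z})" unfolding hatN_in_def
      by (rule min_card_le) (use net xyz in blast)
    ultimately have "ordLeq3 (card_of {x, y}) (card_of {z})"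
      using iso ordLeq_ordIso_trans ordLeq_transitive by metis
    then obtain f where "inj_on f {x, y}" "f ` {x, y} \<subseteq> {z}"
      using card_of_ordLeq[of "{x, y}" "{z}"] by blast
    then show False using inj_onD[of f "{x, y}" x y] \<open>x \<noteq> y\<close> by auto
  qed
  moreover have "?W \<subseteq> M" using xyz by blast
  ultimately show ?thesis using xyz(4) by (intro exI[of _ ?W] exI[of _ \<epsilon>]) blast
qed

text \<open>Failure of (iii): the finite witness set is compact, has covering number at most
  one and packing number at least two.\<close>
lemma non_ultrametric_covering_lt_packing:
  assumes "\<not> ultrametric M d"
  shows "\<exists>W \<epsilon>. W \<subseteq> M \<and> compactin mtopology W \<and> \<epsilon> > 0 \<and>
           covering_number M d \<epsilon> W < packing_number d \<epsilon> W"
proof -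
  obtain x y z \<epsilon> where xyz: "x \<in> M" "y \<in> M" "z \<in> M" "\<epsilon> > 0" "x \<noteq> y"
    and dist: "eps_dist d \<epsilon> {x, y}" and net: "eps_net M d \<epsilon> {z} {x, y, z}"
    using non_ultrametric_witness[OF assms] by blast
  let ?W = "{x, y, z}"
  have cover: "covering_number M d \<epsilon> ?W \<le> 1" unfolding covering_number_def
    by (rule Least_le) (use net in \<open>intro exI[of _ "{z}"], auto\<close>)
  have pack: "2 \<le> packing_number d \<epsilon> ?W" unfolding packing_number_def
  proof (rule Greatest_le_nat[where b = "card ?W"])
    show "\<exists>A. A \<subseteq> ?W \<and> finite A \<and> card A = 2 \<and> eps_dist d \<epsilon> A"
      using dist xyz by (intro exI[of _ "{x, y}"]) auto
    show "n \<le> card ?W" if "\<exists>A. A \<subseteq> ?W \<and> finite A \<and> card A = n \<and> eps_dist d \<epsilon> A" for n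
      using that card_mono[of ?W] by fastforce
  qed
  have "?W \<subseteq> M" using xyz by blast
  moreover have "compactin mtopology ?W" by (rule finite_imp_compactin) (use xyz in auto)
  moreover from cover pack have "covering_number M d \<epsilon> ?W < packing_number d \<epsilon> ?W" by linarith
  ultimately show ?thesis using xyz(4) by (intro exI[of _ ?W] exI[of _ \<epsilon>]) blast
qed

lemma ultrametric_iff_invariants_agree:
  "ultrametric M d \<longleftrightarrow> (\<forall>W \<epsilon>. W \<subseteq> M \<and> \<epsilon> > 0 \<longrightarrow>
               ordIso2 (Mstar d \<epsilon> W) (hatN_in M d M \<epsilon> W) \<and>
               ordIso2 (hatN_in M d M \<epsilon> W) (hatN M d \<epsilon> W) \<and>
               ordIso2 (hatN M d \<epsilon> W) (hatM d \<epsilon> W))" (is "_ \<longleftrightarrow> ?ii")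
proof
  show ?ii if "ultrametric M d" using ultrametric_invariants_agree[OF that] by blast
  show "ultrametric M d" if ?ii
  proof (rule ccontr)
    assume "\<not> ultrametric M d"
    then obtain W \<epsilon> where W: "W \<subseteq> M" "\<epsilon> > 0"
        and differ: "\<not> ordIso2 (Mstar d \<epsilon> W) (hatN_in M d M \<epsilon> W)"
      using non_ultrametric_Mstar_not_hatN_in by blast
    from \<open>?ii\<close> W have "ordIso2 (Mstar d \<epsilon> W) (hatN_in M d M \<epsilon> W)" by simp
    with differ show False by contradiction
  qed
qed

lemma ultrametric_iff_covering_eq_packing:
  "ultrametric M d \<longleftrightarrow> (\<forall>W \<epsilon>. W \<subseteq> M \<and> compactin mtopology W \<and> \<epsilon> > 0 \<longrightarrow>
               covering_number M d \<epsilon> W = packing_number d \<epsilon> W)" (is "_ \<longleftrightarrow> ?iii")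
proof
  show ?iii if "ultrametric M d" using ultrametric_covering_eq_packing[OF that] by blast
  show "ultrametric M d" if ?iii
  proof (rule ccontr)
    assume "\<not> ultrametric M d"
    then obtain W \<epsilon> where W: "W \<subseteq> M" "compactin mtopology W" "\<epsilon> > 0"
        and less: "covering_number M d \<epsilon> W < packing_number d \<epsilon> W"
      using non_ultrametric_covering_lt_packing by blast
    from \<open>?iii\<close> W have "covering_number M d \<epsilon> W = packing_number d \<epsilon> W" by simp
    with less show False by simp
  qed
qed

end

theorem theorem2p9:
  fixes M :: "'a set" and d :: "'a \<Rightarrow> 'a \<Rightarrow> real"
  assumes "Metric_space M d"
  shows "(ultrametric M d
          \<longleftrightarrow> (\<forall>W \<epsilon>. W \<subseteq> M \<and> \<epsilon> > 0 \<longrightarrow>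
                 ordIso2 (Mstar d \<epsilon> W) (hatN_in M d M \<epsilon> W) \<and>
                 ordIso2 (hatN_in M d M \<epsilon> W) (hatN M d \<epsilon> W) \<and>
                 ordIso2 (hatN M d \<epsilon> W) (hatM d \<epsilon> W)))
       \<and> (ultrametric M d
          \<longleftrightarrow> (\<forall>W \<epsilon>. W \<subseteq> M \<and> compactin (Metric_space.mtopology M d) W \<and> \<epsilon> > 0 \<longrightarrow>
                 covering_number M d \<epsilon> W = packing_number d \<epsilon> W))"
proof -
  interpret Metric_space M d by fact
  show ?thesis
    using ultrametric_iff_invariants_agree ultrametric_iff_covering_eq_packing by (intro conjI)
qed

end
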